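(* Let $\mu$ be a Borel probability measure on $[0,1]^k$, let $\mathcal E_1,\mathcal E_2,\dots$ be bounded Borel subsets of $\mathbb R^k$, put $\mathcal E_\infty=\limsup_{n\to\infty}\mathcal E_n$, and let $C\geqslant1$. For each $n$ let $f_n:\mathbb R^k\to[0,\infty)$ be bounded, measurable and supported on $\mathcal E_n$. Suppose the ETP and VTP hold for $(f_n)$ and $\mu$, that $\sum_{n=1}^\infty\lambda(f_n)=\infty$, and that \[ \sum_{m,n\leqslant N}\lambda(f_mf_n)\leqslant C\,E_N(\lambda)^2+O(1)\qquad(N\in\mathbb N). \] Then $\mu(\mathcal E_\infty)\geqslant1/C$.
   Context: $\lambda$ denotes Lebesgue measure on $[0,1]^k$, and for a measure $\nu$ on $[0,1]^k$, $\nu(f)=\int_{[0,1]^k}f\,d\nu$. Put \[ E_N(\nu)=\sum_{n\leqslant N}\nu(f_n),\qquad V_N(\nu)=\int_{[0,1]^k}\Big(\sum_{n\leqslant N}(f_n(\mathbf x)-\lambda(f_n))\Big)^2d\nu(\mathbf x). \] The expectation transference principle (ETP) holds if $E_N(\mu)=(1+o(1))E_N(\lambda)+O(1)$ as $N\to\infty$. The variance transference principle (VTP) holds if $V_N(\mu)=V_N(\lambda)+o(E_N(\mu)^2)+O(1)$ along some sequence of $N\to\infty$. *)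

theory Defs
  imports "HOL-Probability.Probability"
begin

definition unit_cube :: "'a::euclidean_space set" where
  "unit_cube = cbox 0 One"

definition cube_int :: "'a::euclidean_space measure \<Rightarrow> ('a \<Rightarrow> real) \<Rightarrow> real" where
  "cube_int \<nu> f = (LINT x:unit_cube|\<nu>. f x)"

text \<open>Lebesgue measure on [0,1]^k, used via integrals over the cube w.r.t. lborel.\<close>
abbreviation leb :: "'a::euclidean_space measure" where
  "leb \<equiv> lborel"

definition E_N :: "'a::euclidean_space measure \<Rightarrow> (nat \<Rightarrow> 'a \<Rightarrow> real) \<Rightarrow> nat \<Rightarrow> real" where
  "E_N \<nu> f N = (\<Sum>n\<in>{1..N}. cube_int \<nu> (f n))"

definition V_N :: "'a::euclidean_space measure \<Rightarrow> (nat \<Rightarrow> 'a \<Rightarrow> real) \<Rightarrow> nat \<Rightarrow> real" where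
  "V_N \<nu> f N = (LINT x:unit_cube|\<nu>. (\<Sum>n\<in>{1..N}. f n x - cube_int leb (f n))\<^sup>2)"

definition ETP :: "(nat \<Rightarrow> 'a::euclidean_space \<Rightarrow> real) \<Rightarrow> 'a measure \<Rightarrow> bool" where
  "ETP f \<mu> \<longleftrightarrow> (\<exists>g h. g \<longlonglongrightarrow> 0 \<and> Bseq h \<and>
      (\<forall>N. E_N \<mu> f N = (1 + g N) * E_N leb f N + h N))"

definition VTP :: "(nat \<Rightarrow> 'a::euclidean_space \<Rightarrow> real) \<Rightarrow> 'a measure \<Rightarrow> bool" where
  "VTP f \<mu> \<longleftrightarrow> (\<exists>s g h. strict_mono (s :: nat \<Rightarrow> nat) \<and> g \<longlonglongrightarrow> 0 \<and> Bseq h \<and>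
      (\<forall>j. V_N \<mu> f (s j) = V_N leb f (s j) + g j * (E_N \<mu> f (s j))\<^sup>2 + h j))"

end

theory Submission
  imports Defs
begin

text \<open>Let \<open>S\<^sub>N = f\<^sub>1 + \<dots> + f\<^sub>N\<close> and \<open>L\<^sub>N = E\<^sub>N(\<lambda>) \<rightarrow> \<infinity>\<close>. For \<open>M < N\<close> the tail sum
  \<open>f\<^sub>M\<^sub>+\<^sub>1 + \<dots> + f\<^sub>N\<close> vanishes off \<open>T\<^sub>M = \<Union>\<^sub>n\<^sub>>\<^sub>M E\<^sub>n\<close>, so a Paley--Zygmund
  argument gives \<open>\<mu>(T\<^sub>M) \<ge> (2 c (E\<^sub>N(\<mu>) - E\<^sub>M(\<mu>)) - \<mu>(S\<^sub>N\<^sup>2)) / c\<^sup>2\<close> for every \<open>c > 0\<close>.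
  ETP gives \<open>E\<^sub>N(\<mu>) \<sim> L\<^sub>N\<close>, and VTP together with the overlap estimate gives
  \<open>\<mu>(S\<^sub>N\<^sup>2) \<le> (C + o(1)) L\<^sub>N\<^sup>2\<close> along the VTP subsequence. Taking \<open>c = C L\<^sub>N\<close> yields
  \<open>\<mu>(T\<^sub>M) \<ge> 1/C\<close>, and continuity from above passes this to \<open>limsup E\<^sub>n = \<Inter>\<^sub>M T\<^sub>M\<close>.\<close>

definition bounded_borel :: "('a::euclidean_space \<Rightarrow> real) \<Rightarrow> bool" where
  "bounded_borel g \<longleftrightarrow> g \<in> borel_measurable borel \<and> (\<exists>B. \<forall>x. \<bar>g x\<bar> \<le> B)"

lemma bounded_borel_const: "bounded_borel (\<lambda>x. c)"
  unfolding bounded_borel_def by auto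

lemma bounded_borel_add:
  assumes "bounded_borel g" "bounded_borel h"
  shows "bounded_borel (\<lambda>x. g x + h x)"
proof -
  obtain B1 B2 where "\<forall>x. \<bar>g x\<bar> \<le> B1" "\<forall>x. \<bar>h x\<bar> \<le> B2"
    using assms unfolding bounded_borel_def by blast
  then have "\<forall>x. \<bar>g x + h x\<bar> \<le> B1 + B2"
    by (metis abs_triangle_ineq add_mono order_trans)
  with assms show ?thesis unfolding bounded_borel_def by auto
qed

lemma bounded_borel_mult:
  assumes "bounded_borel g" "bounded_borel h"
  shows "bounded_borel (\<lambda>x. g x * h x)"
proof -
  obtain B1 B2 where "\<forall>x. \<bar>g x\<bar> \<le> B1" "\<forall>x. \<bar>h x\<bar> \<le> B2"
    using assms unfolding bounded_borel_def by blast
  then have "\<forall>x. \<bar>g x * h x\<bar> \<le> B1 * B2"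
    by (simp add: abs_mult mult_mono')
  with assms show ?thesis unfolding bounded_borel_def by auto
qed

lemma bounded_borel_diff: "bounded_borel g \<Longrightarrow> bounded_borel h \<Longrightarrow> bounded_borel (\<lambda>x. g x - h x)"
  using bounded_borel_add[of g "\<lambda>x. (-1) * h x"] bounded_borel_mult bounded_borel_const by fastforce

lemma bounded_borel_sum:
  "(\<And>i. i \<in> A \<Longrightarrow> bounded_borel (g i)) \<Longrightarrow> bounded_borel (\<lambda>x. \<Sum>i\<in>A. g i x)"
  by (induction A rule: infinite_finite_induct) (auto intro: bounded_borel_add bounded_borel_const)

lemma bounded_borel_indicator: "A \<in> sets borel \<Longrightarrow> bounded_borel (indicator A)"
  unfolding bounded_borel_def by (intro conjI exI[of _ 1]) (auto split: split_indicator)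

lemma unit_cube_borel [measurable]: "unit_cube \<in> sets borel"
  unfolding unit_cube_def by simp

lemma measure_lborel_unit_cube: "measure lborel (unit_cube :: 'a::euclidean_space set) = 1"
  unfolding unit_cube_def by simp

lemma cube_int_eq_integral: "cube_int M g = (\<integral>x. indicator unit_cube x * g x \<partial>M)"
  unfolding cube_int_def set_lebesgue_integral_def by simp

locale finite_on_cube =
  fixes M :: "'a::euclidean_space measure"
  assumes sets_M: "sets M = sets borel"
    and emeasure_unit_cube_finite: "emeasure M unit_cube < \<infinity>"
begin

lemma integrable_on_cube:
  assumes "bounded_borel g"
  shows "integrable M (\<lambda>x. indicator unit_cube x * g x)"
proof -
  obtain B where B: "\<forall>x. \<bar>g x\<bar> \<le> B" and g: "g \<in> borel_measurable borel"
    using assms unfolding bounded_borel_def by auto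
  show ?thesis
  proof (rule Bochner_Integration.integrable_bound)
    show "integrable M (\<lambda>x. B * indicator unit_cube x)"
      using emeasure_unit_cube_finite sets_M by (intro integrable_mult_right) auto
    show "(\<lambda>x. indicator unit_cube x * g x) \<in> borel_measurable M"
      using g unfolding measurable_cong_sets[OF sets_M refl] by measurable
    show "AE x in M. norm (indicator unit_cube x * g x) \<le> norm (B * indicator unit_cube x :: real)"
      using B by (intro AE_I2) (auto split: split_indicator intro: order_trans[OF _ abs_ge_self])
  qed
qed

lemma cube_int_add:
  "bounded_borel g \<Longrightarrow> bounded_borel h \<Longrightarrow> cube_int M (\<lambda>x. g x + h x) = cube_int M g + cube_int M h"
  unfolding cube_int_eq_integral by (simp add: distrib_left integrable_on_cube)

lemma cube_int_diff:
  "bounded_borel g \<Longrightarrow> bounded_borel h \<Longrightarrow> cube_int M (\<lambda>x. g x - h x) = cube_int M g - cube_int M h"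
  unfolding cube_int_eq_integral by (simp add: right_diff_distrib integrable_on_cube)

lemma cube_int_cmult: "cube_int M (\<lambda>x. c * g x) = c * cube_int M g"
  unfolding cube_int_eq_integral by (simp add: mult.left_commute)

lemma cube_int_sum:
  "(\<And>i. i \<in> A \<Longrightarrow> bounded_borel (g i)) \<Longrightarrow>
    cube_int M (\<lambda>x. \<Sum>i\<in>A. g i x) = (\<Sum>i\<in>A. cube_int M (g i))"
  unfolding cube_int_eq_integral sum_distrib_left
  by (rule Bochner_Integration.integral_sum) (simp add: integrable_on_cube)

lemma cube_int_const: "cube_int M (\<lambda>x. c) = c * measure M unit_cube"
  using sets_M unfolding cube_int_eq_integral
  by (simp add: mult.commute inf.absorb1 sets.sets_into_space)

lemma cube_int_mono:
  "bounded_borel g \<Longrightarrow> bounded_borel h \<Longrightarrow> (\<And>x. x \<in> unit_cube \<Longrightarrow> g x \<le> h x) \<Longrightarrow>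
    cube_int M g \<le> cube_int M h"
  unfolding cube_int_eq_integral
  by (intro integral_mono integrable_on_cube) (auto split: split_indicator)

lemma cube_int_nonneg: "bounded_borel g \<Longrightarrow> (\<And>x. 0 \<le> g x) \<Longrightarrow> 0 \<le> cube_int M g"
  using cube_int_mono[of "\<lambda>x. 0" g] cube_int_const[of 0] by (simp add: bounded_borel_const)

lemma cube_int_indicator:
  assumes "A \<in> sets borel"
  shows "cube_int M (indicator A) = measure M (unit_cube \<inter> A)"
proof -
  have "(\<lambda>x. indicator unit_cube x * indicator A x :: real) = indicator (unit_cube \<inter> A)"
    by (auto split: split_indicator)
  with assms sets_M show ?thesis
    unfolding cube_int_eq_integral by (simp add: inf.absorb1 sets.sets_into_space)
qed

lemma cube_int_square_sum:
  assumes "\<And>i. i \<in> A \<Longrightarrow> bounded_borel (g i)"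
  shows "cube_int M (\<lambda>x. (\<Sum>i\<in>A. g i x)\<^sup>2) = (\<Sum>i\<in>A. \<Sum>j\<in>A. cube_int M (\<lambda>x. g i x * g j x))"
proof -
  have "cube_int M (\<lambda>x. (\<Sum>i\<in>A. g i x)\<^sup>2) = cube_int M (\<lambda>x. \<Sum>i\<in>A. \<Sum>j\<in>A. g i x * g j x)"
    by (simp add: power2_eq_square sum_product)
  also have "\<dots> = (\<Sum>i\<in>A. \<Sum>j\<in>A. cube_int M (\<lambda>x. g i x * g j x))"
    using assms by (simp add: cube_int_sum bounded_borel_sum bounded_borel_mult)
  finally show ?thesis .
qed

lemma E_N_eq_cube_int:
  "(\<And>n. n \<ge> 1 \<Longrightarrow> bounded_borel (f n)) \<Longrightarrow> E_N M f N = cube_int M (\<lambda>x. \<Sum>n\<in>{1..N}. f n x)"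
  unfolding E_N_def by (subst cube_int_sum) auto

lemma V_N_expand:
  assumes "measure M unit_cube = 1" and f: "\<And>n. n \<ge> 1 \<Longrightarrow> bounded_borel (f n)"
  shows "V_N M f N = cube_int M (\<lambda>x. (\<Sum>n\<in>{1..N}. f n x)\<^sup>2)
      - 2 * E_N leb f N * E_N M f N + (E_N leb f N)\<^sup>2"
proof -
  define S where "S x = (\<Sum>n\<in>{1..N}. f n x)" for x
  define L where "L = E_N leb f N"
  have S: "bounded_borel S"
    unfolding S_def using f by (auto intro: bounded_borel_sum)
  have "V_N M f N = cube_int M (\<lambda>x. (S x - L)\<^sup>2)"
    unfolding V_N_def cube_int_def S_def L_def E_N_def by (simp add: sum_subtractf)
  also have "\<dots> = cube_int M (\<lambda>x. ((S x)\<^sup>2 - (2 * L) * S x) + L\<^sup>2)"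
    by (simp add: power2_diff algebra_simps)
  also have "\<dots> = cube_int M (\<lambda>x. (S x)\<^sup>2) - 2 * L * cube_int M S + L\<^sup>2"
    using S assms(1) unfolding power2_eq_square
    by (simp add: cube_int_add cube_int_diff cube_int_cmult cube_int_const
        bounded_borel_diff bounded_borel_mult bounded_borel_const)
  finally show ?thesis
    using E_N_eq_cube_int[OF f] unfolding S_def L_def by simp
qed

end

interpretation lborel_cube: finite_on_cube "lborel :: 'a::euclidean_space measure"
  by unfold_locales (simp_all add: unit_cube_def emeasure_lborel_cbox_finite)

text \<open>Paley--Zygmund with a free parameter \<open>c\<close>: pointwise \<open>2 c S - c\<^sup>2 \<le> S\<^sup>2\<close> on \<open>T\<close>,
  and \<open>S = 0\<close> off \<open>T\<close>.\<close>

lemma (in finite_on_cube) tail_measure_lower_bound: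
  assumes "finite B" "A \<subseteq> B"
    and f: "\<And>n. n \<in> B \<Longrightarrow> bounded_borel (f n)" "\<And>n x. n \<in> B \<Longrightarrow> 0 \<le> f n x"
    and supp: "\<And>n x. n \<in> A \<Longrightarrow> x \<notin> E n \<Longrightarrow> f n x = 0"
    and T: "T \<in> sets borel" "(\<Union>n\<in>A. E n) \<subseteq> T"
  shows "2 * c * cube_int M (\<lambda>x. \<Sum>n\<in>A. f n x) - cube_int M (\<lambda>x. (\<Sum>n\<in>B. f n x)\<^sup>2)
    \<le> c\<^sup>2 * measure M (unit_cube \<inter> T)"
proof -
  define S where "S A' x = (\<Sum>n\<in>A'. f n x)" for A' x
  have S: "bounded_borel (S A')" if "A' \<subseteq> B" for A'
    unfolding S_def using f(1) that by (auto intro: bounded_borel_sum)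
  have pointwise: "2 * c * S A x - c\<^sup>2 * indicator T x \<le> (S A x)\<^sup>2" for x
  proof (cases "x \<in> T")
    case True
    then show ?thesis using zero_le_power2[of "S A x - c"]
      by (simp add: power2_diff algebra_simps)
  next
    case False
    with T(2) supp have "S A x = 0" unfolding S_def by (auto intro!: sum.neutral)
    then show ?thesis by simp
  qed
  have square_mono: "(S A x)\<^sup>2 \<le> (S B x)\<^sup>2" for x
    using assms(1,2) f(2) unfolding S_def
    by (intro power_mono sum_mono2 sum_nonneg) (auto intro: finite_subset)
  have "2 * c * cube_int M (S A) - c\<^sup>2 * measure M (unit_cube \<inter> T)
      = cube_int M (\<lambda>x. 2 * c * S A x - c\<^sup>2 * indicator T x)"
    using S[OF assms(2)] T(1)
    by (simp add: cube_int_diff cube_int_cmult cube_int_indicator bounded_borel_mult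
        bounded_borel_const bounded_borel_indicator)
  also have "\<dots> \<le> cube_int M (\<lambda>x. (S B x)\<^sup>2)"
    using S[OF assms(2)] S[OF order_refl] T(1) pointwise square_mono
    by (intro cube_int_mono order_trans[OF pointwise square_mono]) (auto simp: power2_eq_square
        intro!: bounded_borel_diff bounded_borel_mult bounded_borel_const bounded_borel_indicator)
  finally show ?thesis unfolding S_def by simp
qed

lemma Bseq_divide_tendsto_zero:
  fixes h g :: "nat \<Rightarrow> real"
  assumes "Bseq h" "filterlim g at_top sequentially"
  shows "(\<lambda>n. h n / g n) \<longlonglongrightarrow> 0"
proof -
  have "Zfun (\<lambda>n. inverse (g n)) sequentially"
    using tendsto_inverse_0_at_top[OF assms(2)] by (simp add: tendsto_Zfun_iff)
  with assms(1) have "Zfun (\<lambda>n. h n * inverse (g n)) sequentially"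
    by (rule bounded_bilinear.Bfun_prod_Zfun[OF bounded_bilinear_mult])
  then show ?thesis
    by (simp add: tendsto_Zfun_iff divide_inverse)
qed
lemma not_summable_partial_sums_at_top:
  fixes a :: "nat \<Rightarrow> real"
  assumes nonneg: "\<And>n. 0 \<le> a n" and "\<not> summable a"
  shows "filterlim (\<lambda>N. \<Sum>n<N. a n) at_top sequentially"
  unfolding filterlim_at_top eventually_sequentially
proof
  fix Z
  have "\<not> (\<forall>N. (\<Sum>n\<le>N. a n) \<le> Z)"
    using bounded_imp_summable[of a Z] nonneg assms(2) by blast
  then obtain N where "Z < (\<Sum>n\<le>N. a n)"
    by (auto simp: not_le)
  moreover have "(\<Sum>n\<le>N. a n) \<le> (\<Sum>n<M. a n)" if "M \<ge> Suc N" for M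
    using that nonneg by (intro sum_mono2) auto
  ultimately show "\<exists>N. \<forall>M\<ge>N. Z \<le> (\<Sum>n<M. a n)"
    by (intro exI[of _ "Suc N"]) (auto intro: order.trans[OF less_imp_le])
qed

lemma ETP_ratio_tendsto:
  assumes "ETP f \<mu>" "filterlim (E_N leb f) at_top sequentially"
  shows "(\<lambda>N. E_N \<mu> f N / E_N leb f N) \<longlonglongrightarrow> 1"
proof -
  obtain g h where g: "g \<longlonglongrightarrow> 0" and h: "Bseq h"
    and E_mu: "\<And>N. E_N \<mu> f N = (1 + g N) * E_N leb f N + h N"
    using assms(1) unfolding ETP_def by blast
  have "(\<lambda>N. 1 + g N + h N / E_N leb f N) \<longlonglongrightarrow> 1 + 0 + 0"
    by (intro tendsto_intros g Bseq_divide_tendsto_zero h assms(2))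
  moreover have "\<forall>\<^sub>F N in sequentially. 1 + g N + h N / E_N leb f N = E_N \<mu> f N / E_N leb f N"
    using filterlim_at_top_dense[THEN iffD1, OF assms(2), rule_format, of 0]
    by eventually_elim (simp add: E_mu add_divide_distrib)
  ultimately show ?thesis by (simp add: tendsto_cong)
qed

lemma (in finite_measure) measure_limsup_ge:
  assumes tails: "\<And>n. (\<Union>m\<in>{n<..}. A m) \<in> sets M"
    and bound: "\<And>n. a \<le> measure M (\<Union>m\<in>{n<..}. A m)"
  shows "a \<le> measure M (limsup A)"
proof -
  have limsup: "limsup A = (\<Inter>n. \<Union>m\<in>{n<..}. A m)"
  proof (rule set_eqI)
    fix x
    have "(\<forall>n. \<exists>m\<ge>n. x \<in> A m) \<longleftrightarrow> (\<forall>n. \<exists>m>n. x \<in> A m)"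
      by (meson Suc_le_eq less_imp_le)
    then show "x \<in> limsup A \<longleftrightarrow> x \<in> (\<Inter>n. \<Union>m\<in>{n<..}. A m)"
      by (simp add: limsup_INF_SUP Bex_def)
  qed
  have "decseq (\<lambda>n. \<Union>m\<in>{n<..}. A m)"
    unfolding decseq_def by (fastforce intro: le_less_trans)
  then have "(\<lambda>n. measure M (\<Union>m\<in>{n<..}. A m)) \<longlonglongrightarrow> measure M (limsup A)"
    unfolding limsup using tails by (intro finite_Lim_measure_decseq) auto
  then show ?thesis
    by (rule tendsto_lowerbound) (auto intro: always_eventually bound)
qed

text \<open>Expanding both variances, \<open>V_N(\<mu>) = J - 2 L E_N(\<mu>) + L\<^sup>2\<close> and \<open>V_N(\<lambda>) = D - L\<^sup>2\<close>
  with \<open>L = E_N(\<lambda>)\<close>, the second moment \<open>J\<close> of the partial sum and the overlap sum \<open>D\<close>; so VTP and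
  the overlap bound give \<open>J \<le> (C - 2) L\<^sup>2 + 2 L E_N(\<mu>) + o(L\<^sup>2) = (C + o(1)) L\<^sup>2\<close>.\<close>

lemma (in finite_on_cube) second_moment_bound:
  assumes cube: "measure M unit_cube = 1"
    and f: "\<And>n. n \<ge> 1 \<Longrightarrow> bounded_borel (f n)"
    and vtp: "VTP f M"
    and overlap: "\<exists>h. Bseq h \<and> (\<forall>N. (\<Sum>m\<in>{1..N}. \<Sum>n\<in>{1..N}. cube_int leb (\<lambda>x. f m x * f n x))
                     \<le> C * (E_N leb f N)\<^sup>2 + h N)"
    and L_top: "filterlim (E_N leb f) at_top sequentially"
    and ratio: "(\<lambda>N. E_N M f N / E_N leb f N) \<longlonglongrightarrow> 1"
  obtains s \<epsilon> where "strict_mono s" "\<epsilon> \<longlonglongrightarrow> 0"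
    "\<forall>\<^sub>F j in sequentially.
       cube_int M (\<lambda>x. (\<Sum>n\<in>{1..s j}. f n x)\<^sup>2) \<le> (C + \<epsilon> j) * (E_N leb f (s j))\<^sup>2"
proof -
  define L where "L = E_N leb f"
  define r where "r N = E_N M f N / L N" for N
  define J where "J M' N = cube_int M' (\<lambda>x. (\<Sum>n\<in>{1..N}. f n x)\<^sup>2)" for M' N
  obtain h0 where h0: "Bseq h0" and overlap_J: "\<And>N. J leb N \<le> C * (L N)\<^sup>2 + h0 N"
  proof -
    have "J leb N = (\<Sum>m\<in>{1..N}. \<Sum>n\<in>{1..N}. cube_int leb (\<lambda>x. f m x * f n x))" for N
      unfolding J_def by (rule lborel_cube.cube_int_square_sum) (simp add: f)
    with overlap that show thesis unfolding L_def by auto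
  qed
  obtain s g h1 where s: "strict_mono s" and g: "g \<longlonglongrightarrow> 0" and h1: "Bseq h1"
    and V: "\<And>j. V_N M f (s j) = V_N leb f (s j) + g j * (E_N M f (s j))\<^sup>2 + h1 j"
    using vtp unfolding VTP_def by blast
  define \<epsilon> where
    "\<epsilon> j = h0 (s j) / (L (s j))\<^sup>2 + h1 j / (L (s j))\<^sup>2 + g j * (r (s j))\<^sup>2 + 2 * r (s j) - 2" for j
  have L_s: "filterlim (\<lambda>j. L (s j)) at_top sequentially"
    unfolding L_def by (rule filterlim_compose[OF L_top filterlim_subseq[OF s]])
  have L2_s: "filterlim (\<lambda>j. (L (s j))\<^sup>2) at_top sequentially"
    by (rule filterlim_pow_at_top[OF _ L_s]) simp
  have "(\<lambda>j. r (s j)) \<longlonglongrightarrow> 1"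
    using LIMSEQ_subseq_LIMSEQ[OF ratio s] by (simp add: r_def L_def o_def)
  moreover have "(\<lambda>j. h0 (s j) / (L (s j))\<^sup>2) \<longlonglongrightarrow> 0"
    by (rule Bseq_divide_tendsto_zero[OF Bseq_subseq[OF h0] L2_s])
  moreover have "(\<lambda>j. h1 j / (L (s j))\<^sup>2) \<longlonglongrightarrow> 0"
    by (rule Bseq_divide_tendsto_zero[OF h1 L2_s])
  ultimately have "\<epsilon> \<longlonglongrightarrow> 0 + 0 + 0 * 1\<^sup>2 + 2 * 1 - 2"
    unfolding \<epsilon>_def by (intro tendsto_intros g)
  then have "\<epsilon> \<longlonglongrightarrow> 0" by simp
  moreover have "\<forall>\<^sub>F j in sequentially. J M (s j) \<le> (C + \<epsilon> j) * (L (s j))\<^sup>2"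
    using filterlim_at_top_dense[THEN iffD1, OF L_s, rule_format, of 0]
  proof eventually_elim
    case (elim j)
    have "V_N M f (s j) = J M (s j) - 2 * L (s j) * E_N M f (s j) + (L (s j))\<^sup>2"
      using V_N_expand[OF cube f] unfolding J_def L_def by simp
    moreover have "V_N leb f (s j) = J leb (s j) - (L (s j))\<^sup>2"
      using lborel_cube.V_N_expand[OF measure_lborel_unit_cube f] unfolding J_def L_def
      by (simp add: power2_eq_square)
    moreover have "(C + \<epsilon> j) * (L (s j))\<^sup>2 = (C - 2) * (L (s j))\<^sup>2 + h0 (s j) + h1 j
        + g j * (E_N M f (s j))\<^sup>2 + 2 * L (s j) * E_N M f (s j)"
      using elim unfolding \<epsilon>_def r_def by (simp add: field_simps power2_eq_square)
    ultimately show ?case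
      using V[of j] overlap_J[of "s j"] by (simp add: algebra_simps)
  qed
  ultimately show ?thesis
    using that s unfolding J_def L_def by blast
qed

lemma (in finite_on_cube) tail_measure_ge_inverse:
  assumes "finite_measure M" "C > 0"
    and f: "\<And>n. n \<ge> 1 \<Longrightarrow> bounded_borel (f n)" "\<And>n x. n \<ge> 1 \<Longrightarrow> 0 \<le> f n x"
    and supp: "\<And>n x. n \<ge> 1 \<Longrightarrow> x \<notin> E n \<Longrightarrow> f n x = 0"
    and T: "(\<Union>m\<in>{k<..}. E m) \<in> sets borel"
    and L_top: "filterlim (E_N leb f) at_top sequentially"
    and ratio: "(\<lambda>N. E_N M f N / E_N leb f N) \<longlonglongrightarrow> 1"
    and s: "strict_mono s" and \<epsilon>: "\<epsilon> \<longlonglongrightarrow> 0"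
    and J: "\<forall>\<^sub>F j in sequentially.
       cube_int M (\<lambda>x. (\<Sum>n\<in>{1..s j}. f n x)\<^sup>2) \<le> (C + \<epsilon> j) * (E_N leb f (s j))\<^sup>2"
  shows "1 / C \<le> measure M (\<Union>m\<in>{k<..}. E m)"
proof -
  interpret finite_measure M by (rule assms(1))
  define T where "T = (\<Union>m\<in>{k<..}. E m)"
  define L where "L = E_N leb f"
  \<comment> \<open>\<open>z j\<close> is the Paley--Zygmund bound at \<open>c = C L(s j)\<close> with the second moment estimate inserted.\<close>
  define z where "z j = 2 * (E_N M f (s j) / L (s j)) / C - 2 * E_N M f k / (C * L (s j))
    - (C + \<epsilon> j) / C\<^sup>2" for j
  have L_s: "filterlim (\<lambda>j. L (s j)) at_top sequentially"
    unfolding L_def by (rule filterlim_compose[OF L_top filterlim_subseq[OF s]])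
  have "(\<lambda>j. E_N M f (s j) / L (s j)) \<longlonglongrightarrow> 1"
    using LIMSEQ_subseq_LIMSEQ[OF ratio s] by (simp add: L_def o_def)
  moreover have "filterlim (\<lambda>j. C * L (s j)) at_infinity sequentially"
    using filterlim_tendsto_pos_mult_at_top[OF tendsto_const assms(2) L_s]
    by (rule filterlim_at_top_imp_at_infinity)
  then have "(\<lambda>j. 2 * E_N M f k / (C * L (s j))) \<longlonglongrightarrow> 0"
    by (rule tendsto_divide_0[OF tendsto_const])
  ultimately have "z \<longlonglongrightarrow> 2 * 1 / C - 0 - (C + 0) / C\<^sup>2"
    unfolding z_def using assms(2) by (intro tendsto_intros \<epsilon>) simp_all
  then have "z \<longlonglongrightarrow> 1 / C"
    using assms(2) by (simp add: power2_eq_square)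
  moreover have "\<forall>\<^sub>F j in sequentially. z j \<le> measure M T"
    using filterlim_at_top_dense[THEN iffD1, OF L_s, rule_format, of 0] J
      eventually_ge_at_top[of "Suc k"]
  proof eventually_elim
    case (elim j)
    define c where "c = C * L (s j)"
    have c: "c > 0" unfolding c_def using elim(1) assms(2) by simp
    have k: "k \<le> s j" using elim(3) seq_suble[OF s, of j] by linarith
    define S_tail where "S_tail = cube_int M (\<lambda>x. \<Sum>n\<in>{k<..s j}. f n x)"
    define J where "J = cube_int M (\<lambda>x. (\<Sum>n\<in>{1..s j}. f n x)\<^sup>2)"
    have tail_sum: "E_N M f (s j) - E_N M f k = S_tail"
    proof -
      have "{1..s j} = {1..k} \<union> {k<..s j}" "{1..k} \<inter> {k<..s j} = {}" using k by auto
      then have "E_N M f (s j) = E_N M f k + (\<Sum>n\<in>{k<..s j}. cube_int M (f n))"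
        unfolding E_N_def by (simp add: sum.union_disjoint)
      with f(1) show ?thesis unfolding S_tail_def by (subst cube_int_sum) auto
    qed
    have "z j = (2 * c * S_tail - (C + \<epsilon> j) * (L (s j))\<^sup>2) / c\<^sup>2"
      using elim(1) assms(2) unfolding z_def c_def tail_sum[symmetric]
      by (simp add: field_simps power2_eq_square)
    also have "\<dots> \<le> (2 * c * S_tail - J) / c\<^sup>2"
      using elim(2) unfolding J_def L_def by (intro divide_right_mono) simp_all
    also have "\<dots> \<le> measure M (unit_cube \<inter> T)"
    proof -
      have "2 * c * S_tail - J \<le> c\<^sup>2 * measure M (unit_cube \<inter> T)"
        using f supp T unfolding S_tail_def J_def T_def
        by (intro tail_measure_lower_bound[where E = E]) auto
      then show ?thesis using c by (simp add: divide_le_eq mult.commute)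
    qed
    also have "\<dots> \<le> measure M T"
      using T sets_M unfolding T_def by (intro finite_measure_mono) auto
    finally show ?case .
  qed
  ultimately show ?thesis
    unfolding T_def by (rule tendsto_upperbound) simp_all
qed

theorem lemma2p3:
  fixes \<mu> :: "'a::euclidean_space measure"
    and E :: "nat \<Rightarrow> 'a set"
    and f :: "nat \<Rightarrow> 'a \<Rightarrow> real"
    and C :: real
  assumes mu_borel: "sets \<mu> = sets borel"
    and mu_prob: "prob_space \<mu>"
    and mu_cube: "emeasure \<mu> unit_cube = 1"
    and E_borel: "\<And>n. n \<ge> 1 \<Longrightarrow> E n \<in> sets borel"
    and E_bounded: "\<And>n. n \<ge> 1 \<Longrightarrow> bounded (E n)"
    and C_ge: "C \<ge> 1"
    and f_nonneg: "\<And>n x. n \<ge> 1 \<Longrightarrow> f n x \<ge> 0"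
    and f_bounded: "\<And>n. n \<ge> 1 \<Longrightarrow> \<exists>B. \<forall>x. f n x \<le> B"
    and f_meas: "\<And>n. n \<ge> 1 \<Longrightarrow> f n \<in> borel_measurable borel"
    and f_supp: "\<And>n x. n \<ge> 1 \<Longrightarrow> x \<notin> E n \<Longrightarrow> f n x = 0"
    and etp: "ETP f \<mu>"
    and vtp: "VTP f \<mu>"
    and diverge: "\<not> summable (\<lambda>n. cube_int leb (f (Suc n)))"
    and overlap: "\<exists>h. Bseq h \<and> (\<forall>N. (\<Sum>m\<in>{1..N}. \<Sum>n\<in>{1..N}. cube_int leb (\<lambda>x. f m x * f n x))
                     \<le> C * (E_N leb f N)\<^sup>2 + h N)"
  shows "measure \<mu> (limsup E) \<ge> 1 / C"
proof -
  interpret prob_space \<mu> by (rule mu_prob)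
  interpret mu: finite_on_cube \<mu> using mu_borel mu_cube by unfold_locales simp_all
  have cube: "measure \<mu> unit_cube = 1"
    using mu_cube by (simp add: measure_def)
  have f: "bounded_borel (f n)" if "n \<ge> 1" for n
    using f_bounded[OF that] f_meas[OF that] f_nonneg[OF that]
    unfolding bounded_borel_def by (metis abs_of_nonneg)
  have "filterlim (\<lambda>N. \<Sum>n<N. cube_int leb (f (Suc n))) at_top sequentially"
    using diverge f f_nonneg
    by (intro not_summable_partial_sums_at_top lborel_cube.cube_int_nonneg) auto
  then have L_top: "filterlim (E_N leb f) at_top sequentially"
    by (simp only: E_N_def[abs_def] sum_bounds_lt_plus1[symmetric])
  have ratio: "(\<lambda>N. E_N \<mu> f N / E_N leb f N) \<longlonglongrightarrow> 1"
    using etp L_top by (rule ETP_ratio_tendsto)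
  obtain s \<epsilon> where "strict_mono s" "\<epsilon> \<longlonglongrightarrow> 0"
    "\<forall>\<^sub>F j in sequentially.
       cube_int \<mu> (\<lambda>x. (\<Sum>n\<in>{1..s j}. f n x)\<^sup>2) \<le> (C + \<epsilon> j) * (E_N leb f (s j))\<^sup>2"
    by (rule mu.second_moment_bound[OF cube f vtp overlap L_top ratio])
  have tails: "(\<Union>m\<in>{k<..}. E m) \<in> sets borel" for k
    using E_borel by (intro sets.countable_UN') auto
  have "1 / C \<le> measure \<mu> (\<Union>m\<in>{k<..}. E m)" for k
    using C_ge f f_nonneg f_supp tails L_top ratio \<open>strict_mono s\<close> \<open>\<epsilon> \<longlonglongrightarrow> 0\<close> \<open>\<forall>\<^sub>F j in _. _\<close>
    by (intro mu.tail_measure_ge_inverse) (auto intro: finite_measure_axioms)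
  then show ?thesis
    using tails mu_borel by (intro measure_limsup_ge) auto
qed

end
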